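(* Let $a,b,c,q$ be complex parameters for which all series below are defined (no denominator parameter a nonpositive integer), and for $|x|<1$ put \[ F^q(x):={}_3F_2\!\left({1,c,q\atop a,b};x\right), \] and write $F_a(x)$ for the same function regarded as depending on the parameter $a$ (so $F_{a-1}$, $F_{a-2}$ have $a$ replaced by $a-1$, $a-2$). Then \[ (a-q-1)(b-q-1)F^q(x)+q\big(a+b-3-2q-(c-q-1)x\big)F^{q+1}(x)+q(1+q)(1-x)F^{q+2}(x)=(a-1)(b-1), \] \[ (a-2)(a-1)(1-x)F_{a-2}(x)+(a-1)\big((2a-c-q-3)x-a+b+1\big)F_{a-1}(x)-(a-q-1)(a-c-1)x\,F_a(x)=(a-1)(b-1). \] In particular, if $a,b,c,q$ are real with $a+b>c+q+2$, then \[ (a-q-1)(b-q-1)F^q(1)+q(a+b-c-2-q)F^{q+1}(1)=(a-1)(b-1), \] \[ (a-1)(a+b-c-q-2)F_{a-1}(1)-(a-q-1)(a-c-1)F_a(1)=(a-1)(b-1). \]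
   Context: ${}_3F_2\!\left({a_1,a_2,a_3\atop b_1,b_2};x\right)=\sum_{n\ge0}\frac{(a_1)_n(a_2)_n(a_3)_n}{(b_1)_n(b_2)_n}\frac{x^n}{n!}$ with $(x)_n=x(x+1)\cdots(x+n-1)$; it converges at $x=1$ when $b_1+b_2-a_1-a_2-a_3>0$. *)

theory Defs
  imports "HOL-Analysis.Analysis"
begin

definition hyp3F2 :: "complex \<Rightarrow> complex \<Rightarrow> complex \<Rightarrow> complex \<Rightarrow> complex \<Rightarrow> complex \<Rightarrow> complex" where
  "hyp3F2 a1 a2 a3 b1 b2 x =
     (\<Sum>n. pochhammer a1 n * pochhammer a2 n * pochhammer a3 n
            / (pochhammer b1 n * pochhammer b2 n) * x ^ n / of_nat (fact n))"

end

theory Submission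
  imports Defs
begin

text \<open>Let \<open>A(n) = (c)\<^sub>n (p)\<^sub>n / ((a)\<^sub>n (b)\<^sub>n)\<close> be the coefficient of \<open>x\<^sup>n\<close> in
  \<open>\<^sub>3F\<^sub>2(1, c, p; a, b; x)\<close>. Shifting \<open>p\<close> or \<open>a\<close> by one changes \<open>A(n)\<close> by a factor
  linear in \<open>n\<close>, and \<open>(a + n)(b + n) A(n + 1) = (c + n)(p + n) A(n)\<close>. Together these show
  that the coefficient of \<open>x\<^sup>n\<^sup>+\<^sup>1\<close> of a three-term combination of contiguous series equals
  the coefficient of \<open>x\<^sup>n\<close> of a shorter combination, so the long combination is its constant
  term \<open>(a - 1)(b - 1)\<close> plus \<open>x\<close> times the short one; this is each identity for \<open>|x| < 1\<close>.
  At \<open>x = 1\<close> the same coefficient relations telescope, with a boundary term proportional to a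
  single coefficient that tends to \<open>0\<close>, because \<open>|A(n)|\<close> grows like \<open>n\<close> to the power
  \<open>Re (c + p - a - b)\<close> by the Gamma-function asymptotics of Pochhammer symbols.\<close>

lemma pochhammer_nonzero: "a \<notin> \<int>\<^sub>\<le>\<^sub>0 \<Longrightarrow> pochhammer (a::'a::field_char_0) n \<noteq> 0"
  using pochhammer_eq_0_imp_nonpos_Int by blast

lemma pochhammer_shift: "z * pochhammer (z + 1) n = (z + of_nat n) * pochhammer z n"
  by (metis pochhammer_rec pochhammer_rec')

lemma sums_shift_eq:
  fixes f g :: "nat \<Rightarrow> 'a::real_normed_field"
  assumes "f sums S" "g sums T" "\<And>n. f (Suc n) = x * g n" "f 0 = h"
  shows "S = h + x * T"
proof -
  have "(\<lambda>n. f (Suc n)) sums (x * T)"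
    using sums_mult[OF assms(2), of x] by (simp add: assms(3))
  then have "f sums (x * T + h)"
    by (simp add: sums_Suc_iff assms(4))
  with assms(1) show ?thesis
    by (simp add: sums_unique2 add.commute)
qed

lemma sums_telescoping_eq:
  fixes f g w :: "nat \<Rightarrow> 'a::real_normed_vector"
  assumes "f sums S" "g sums T" "w \<longlonglongrightarrow> 0" "\<And>n. f (Suc n) + w (Suc n) = g n + w n"
    and "f 0 + w 0 = h"
  shows "S = h + T"
proof -
  have "(\<lambda>n. g n + (w n - w (Suc n))) sums (T + (w 0 - 0))"
    by (intro sums_add assms(2) telescope_sums' assms(3))
  moreover have "g n + (w n - w (Suc n)) = f (Suc n)" for n
    using assms(4)[of n] by (simp add: algebra_simps)
  ultimately have "f sums (T + w 0 + f 0)"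
    by (simp add: sums_Suc_iff[symmetric])
  with assms(1,5) show ?thesis
    by (simp add: sums_unique2 algebra_simps)
qed

lemma summable_real_powr_times_power:
  fixes r :: real
  assumes "0 \<le> r" "r < 1"
  shows "summable (\<lambda>n. real n powr s * r ^ n)"
proof -
  have "(\<lambda>n. (real n / real (Suc n)) powr s) \<longlonglongrightarrow> 1 powr s"
    by (intro tendsto_powr LIMSEQ_n_over_Suc_n tendsto_const) simp_all
  then have "(\<lambda>n. real n powr s / real (Suc n) powr s) \<longlonglongrightarrow> 1"
    by (simp add: powr_divide)
  then have "conv_radius (\<lambda>n. real n powr s) = 1"
    by (intro conv_radius_ratio_limit_nonzero[of 1 1]) simp_all
  then show ?thesis
    using assms by (intro summable_in_conv_radius) simp
qed

definition hyp3F2_coeff :: "complex \<Rightarrow> complex \<Rightarrow> complex \<Rightarrow> complex \<Rightarrow> nat \<Rightarrow> complex" where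
  "hyp3F2_coeff c p a b n = pochhammer c n * pochhammer p n / (pochhammer a n * pochhammer b n)"

lemma hyp3F2_one_eq_suminf: "hyp3F2 1 c p a b x = (\<Sum>n. hyp3F2_coeff c p a b n * x ^ n)"
  unfolding hyp3F2_def hyp3F2_coeff_def by (simp add: pochhammer_fact[symmetric] mult_ac)

lemma hyp3F2_coeff_0 [simp]: "hyp3F2_coeff c p a b 0 = 1"
  by (simp add: hyp3F2_coeff_def)

lemma hyp3F2_coeff_Suc:
  assumes "a \<notin> \<int>\<^sub>\<le>\<^sub>0" "b \<notin> \<int>\<^sub>\<le>\<^sub>0"
  shows "(a + of_nat n) * (b + of_nat n) * hyp3F2_coeff c p a b (Suc n)
       = (c + of_nat n) * (p + of_nat n) * hyp3F2_coeff c p a b n"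
proof -
  have "a + of_nat n \<noteq> 0" "pochhammer a n \<noteq> 0" "b + of_nat n \<noteq> 0" "pochhammer b n \<noteq> 0"
    using pochhammer_nonzero[OF assms(1), of "Suc n"] pochhammer_nonzero[OF assms(2), of "Suc n"]
    by (simp_all add: pochhammer_rec')
  then show ?thesis
    by (simp add: hyp3F2_coeff_def pochhammer_rec' divide_simps ac_simps)
qed

lemma hyp3F2_coeff_numerator_shift:
  "p * hyp3F2_coeff c (p + 1) a b n = (p + of_nat n) * hyp3F2_coeff c p a b n"
  using pochhammer_shift[of p n] unfolding hyp3F2_coeff_def
  by (metis (no_types, lifting) mult.left_commute times_divide_eq_right)

lemma hyp3F2_coeff_denominator_shift:
  assumes "d \<notin> \<int>\<^sub>\<le>\<^sub>0" "d + 1 \<notin> \<int>\<^sub>\<le>\<^sub>0" "b \<notin> \<int>\<^sub>\<le>\<^sub>0"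
  shows "d * hyp3F2_coeff c p d b n = (d + of_nat n) * hyp3F2_coeff c p (d + 1) b n"
  using pochhammer_nonzero[OF assms(1), of n] pochhammer_nonzero[OF assms(2), of n]
        pochhammer_nonzero[OF assms(3), of n] pochhammer_shift[of d n]
  unfolding hyp3F2_coeff_def by (simp add: field_simps) algebra

lemma hyp3F2_coeff_numerator_recurrence:
  fixes a b c q :: complex
  assumes "a \<notin> \<int>\<^sub>\<le>\<^sub>0" "b \<notin> \<int>\<^sub>\<le>\<^sub>0"
  defines "A \<equiv> \<lambda>p. hyp3F2_coeff c p a b"
  shows "(a-q-1)*(b-q-1)*A q (Suc n) + q*(a+b-3-2*q)*A (q+1) (Suc n) + q*(1+q)*A (q+2) (Suc n)
       = q*(c-q-1)*A (q+1) n + q*(1+q)*A (q+2) n"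
proof -
  have shift: "q * A (q+1) m = (q + of_nat m) * A q m"
              "(q+1) * A (q+2) m = (q + 1 + of_nat m) * A (q+1) m" for m
    unfolding A_def using hyp3F2_coeff_numerator_shift[of q] hyp3F2_coeff_numerator_shift[of "q+1"]
    by (simp_all add: add.assoc)
  show ?thesis
    using hyp3F2_coeff_Suc[OF assms(1,2), of n c q] shift[of n] shift[of "Suc n"]
    unfolding A_def by simp algebra
qed

lemma hyp3F2_coeff_denominator_recurrence:
  fixes a b c q :: complex
  assumes "a - 2 \<notin> \<int>\<^sub>\<le>\<^sub>0" "a - 1 \<notin> \<int>\<^sub>\<le>\<^sub>0" "a \<notin> \<int>\<^sub>\<le>\<^sub>0" "b \<notin> \<int>\<^sub>\<le>\<^sub>0"
  defines "A \<equiv> \<lambda>d. hyp3F2_coeff c q d b"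
  shows "(a-2)*(a-1)*A (a-2) (Suc n) + (a-1)*(b-a+1)*A (a-1) (Suc n)
       = (a-2)*(a-1)*A (a-2) n - (a-1)*(2*a-c-q-3)*A (a-1) n + (a-q-1)*(a-c-1)*A a n"
proof -
  have shift: "(a-1) * A (a-1) m = (a - 1 + of_nat m) * A a m"
              "(a-2) * A (a-2) m = (a - 2 + of_nat m) * A (a-1) m" for m
    using hyp3F2_coeff_denominator_shift[of "a-1" b c q m]
          hyp3F2_coeff_denominator_shift[of "a-2" b c q m] assms
    by (simp_all add: A_def diff_add_eq[symmetric])
  show ?thesis
    using hyp3F2_coeff_Suc[OF assms(3,4), of n c q] shift[of n] shift[of "Suc n"]
    unfolding A_def by simp algebra
qed

lemma hyp3F2_coeff_growth:
  assumes "a \<notin> \<int>\<^sub>\<le>\<^sub>0" "b \<notin> \<int>\<^sub>\<le>\<^sub>0"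
  obtains M where
    "\<And>n. n \<ge> 1 \<Longrightarrow> norm (hyp3F2_coeff c p a b (Suc n)) \<le> M * real n powr Re (c + p - a - b)"
proof -
  \<comment> \<open>\<open>rGamma_series z n = (z)\<^sub>n\<^sub>+\<^sub>1 / (n! n\<^sup>z)\<close>, so \<open>R n\<close> is \<open>A(n + 1)\<close>
    divided by \<open>n\<close> to the power \<open>c + p - a - b\<close>\<close>
  define R where "R n = rGamma_series c n * rGamma_series p n / (rGamma_series a n * rGamma_series b n)" for n
  have "R \<longlonglongrightarrow> rGamma c * rGamma p / (rGamma a * rGamma b)"
    unfolding R_def using assms by (intro tendsto_intros) (auto simp: rGamma_eq_zero_iff)
  then have "Bseq R"
    by (rule convergent_imp_Bseq[OF convergentI])
  then obtain M where M: "\<And>n. norm (R n) \<le> M"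
    unfolding Bseq_def by blast
  have "hyp3F2_coeff c p a b (Suc n) = R n * exp ((c + p - a - b) * of_real (ln (real n)))" for n
  proof -
    define L where "L = (of_real (ln (real n)) :: complex)"
    have "exp ((c + p - a - b) * L) = exp (c*L) * exp (p*L) / (exp (a*L) * exp (b*L))"
      by (simp add: algebra_simps exp_diff exp_add)
    moreover have "pochhammer a (Suc n) \<noteq> 0" "pochhammer b (Suc n) \<noteq> 0"
      using pochhammer_nonzero assms by auto
    ultimately show ?thesis
      unfolding hyp3F2_coeff_def R_def rGamma_series_def L_def[symmetric] by (simp add: field_simps)
  qed
  then have "norm (hyp3F2_coeff c p a b (Suc n)) = norm (R n) * real n powr Re (c + p - a - b)" if "n \<ge> 1" for n
    using that by (simp add: norm_mult powr_def mult.commute)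
  then show ?thesis
    using M by (intro that) (simp add: mult_right_mono)
qed

lemma summable_hyp3F2_coeff:
  assumes "a \<notin> \<int>\<^sub>\<le>\<^sub>0" "b \<notin> \<int>\<^sub>\<le>\<^sub>0" "Re (c + p - a - b) < -1"
  shows "summable (hyp3F2_coeff c p a b)"
proof -
  obtain M where M: "\<And>n. n \<ge> 1 \<Longrightarrow> norm (hyp3F2_coeff c p a b (Suc n)) \<le> M * real n powr Re (c + p - a - b)"
    using hyp3F2_coeff_growth[OF assms(1,2)] by blast
  have "summable (\<lambda>n. M * real n powr Re (c + p - a - b))"
    using assms(3) by (intro summable_mult) (simp add: summable_real_powr_iff)
  then have "summable (\<lambda>n. hyp3F2_coeff c p a b (Suc n))"
    by (rule summable_comparison_test'[where N=1]) (use M in auto)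
  then show ?thesis
    by (simp add: summable_Suc_iff)
qed

lemma hyp3F2_coeff_tendsto_zero:
  assumes "a \<notin> \<int>\<^sub>\<le>\<^sub>0" "b \<notin> \<int>\<^sub>\<le>\<^sub>0" "Re (c + p - a - b) < 0"
  shows "hyp3F2_coeff c p a b \<longlonglongrightarrow> 0"
proof -
  obtain M where M: "\<And>n. n \<ge> 1 \<Longrightarrow> norm (hyp3F2_coeff c p a b (Suc n)) \<le> M * real n powr Re (c + p - a - b)"
    using hyp3F2_coeff_growth[OF assms(1,2)] by blast
  have "eventually (\<lambda>n. norm (hyp3F2_coeff c p a b (Suc n)) \<le> M * real n powr Re (c + p - a - b)) sequentially"
    using eventually_ge_at_top[of "1::nat"] by (rule eventually_mono) (rule M)
  moreover have "(\<lambda>n. M * real n powr Re (c + p - a - b)) \<longlonglongrightarrow> 0"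
    by (rule tendsto_mult_right_zero[OF tendsto_neg_powr[OF assms(3) filterlim_real_sequentially]])
  ultimately have "(\<lambda>n. hyp3F2_coeff c p a b (Suc n)) \<longlonglongrightarrow> 0"
    by (rule Lim_null_comparison)
  then show ?thesis
    by (rule LIMSEQ_imp_Suc)
qed

lemma summable_hyp3F2_coeff_power:
  assumes "a \<notin> \<int>\<^sub>\<le>\<^sub>0" "b \<notin> \<int>\<^sub>\<le>\<^sub>0" "norm x < 1"
  shows "summable (\<lambda>n. hyp3F2_coeff c p a b n * x ^ n)"
proof -
  define s where "s = Re (c + p - a - b)"
  obtain M where M: "\<And>n. n \<ge> 1 \<Longrightarrow> norm (hyp3F2_coeff c p a b (Suc n)) \<le> M * real n powr s"
    using hyp3F2_coeff_growth[OF assms(1,2)] unfolding s_def by blast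
  have "summable (\<lambda>n. norm x * M * (real n powr s * norm x ^ n))"
    using assms(3) by (intro summable_mult summable_real_powr_times_power) auto
  then have "summable (\<lambda>n. hyp3F2_coeff c p a b (Suc n) * x ^ Suc n)"
  proof (rule summable_comparison_test'[where N=1])
    fix n :: nat assume "n \<ge> 1"
    have "norm (hyp3F2_coeff c p a b (Suc n) * x ^ Suc n) = norm x ^ Suc n * norm (hyp3F2_coeff c p a b (Suc n))"
      by (simp add: norm_mult norm_power)
    also have "\<dots> \<le> norm x ^ Suc n * (M * real n powr s)"
      using M[OF \<open>n \<ge> 1\<close>] by (intro mult_left_mono) auto
    finally show "norm (hyp3F2_coeff c p a b (Suc n) * x ^ Suc n) \<le> norm x * M * (real n powr s * norm x ^ n)"
      by (simp add: mult_ac)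
  qed
  then show ?thesis
    by (rule summable_Suc_iff[THEN iffD1])
qed

lemma hyp3F2_numerator_contiguous:
  fixes a b c q x :: complex
  assumes a: "a \<notin> \<int>\<^sub>\<le>\<^sub>0" and b: "b \<notin> \<int>\<^sub>\<le>\<^sub>0" and x: "norm x < 1"
  shows "(a - q - 1) * (b - q - 1) * hyp3F2 1 c q a b x
           + q * (a + b - 3 - 2 * q - (c - q - 1) * x) * hyp3F2 1 c (q + 1) a b x
           + q * (1 + q) * (1 - x) * hyp3F2 1 c (q + 2) a b x
         = (a - 1) * (b - 1)"
proof -
  define A where "A p n = hyp3F2_coeff c p a b n * x ^ n" for p n
  define F where "F p = hyp3F2 1 c p a b x" for p
  have sums: "A p sums F p" for p
    unfolding A_def F_def hyp3F2_one_eq_suminf using summable_hyp3F2_coeff_power[OF a b x]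
    by (rule summable_sums)
  have "(\<lambda>n. (a-q-1)*(b-q-1) * A q n + q*(a+b-3-2*q) * A (q+1) n + q*(1+q) * A (q+2) n)
          sums ((a-q-1)*(b-q-1) * F q + q*(a+b-3-2*q) * F (q+1) + q*(1+q) * F (q+2))"
    by (intro sums_add sums_mult sums)
  moreover have "(\<lambda>n. q*(c-q-1) * A (q+1) n + q*(1+q) * A (q+2) n)
          sums (q*(c-q-1) * F (q+1) + q*(1+q) * F (q+2))"
    by (intro sums_add sums_mult sums)
  moreover have "(a-q-1)*(b-q-1) * A q (Suc n) + q*(a+b-3-2*q) * A (q+1) (Suc n) + q*(1+q) * A (q+2) (Suc n)
      = x * (q*(c-q-1) * A (q+1) n + q*(1+q) * A (q+2) n)" for n
    using arg_cong[where f="\<lambda>t. t * x ^ Suc n", OF hyp3F2_coeff_numerator_recurrence[OF a b, where c=c and q=q and n=n]]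
    unfolding A_def by (simp add: algebra_simps)
  moreover have "(a-q-1)*(b-q-1) * A q 0 + q*(a+b-3-2*q) * A (q+1) 0 + q*(1+q) * A (q+2) 0 = (a-1)*(b-1)"
    by (simp add: A_def algebra_simps)
  ultimately have "(a-q-1)*(b-q-1) * F q + q*(a+b-3-2*q) * F (q+1) + q*(1+q) * F (q+2)
      = (a-1)*(b-1) + x * (q*(c-q-1) * F (q+1) + q*(1+q) * F (q+2))"
    by (rule sums_shift_eq)
  moreover have "(a - q - 1) * (b - q - 1) * F q + q * (a + b - 3 - 2 * q - (c - q - 1) * x) * F (q + 1)
      + q * (1 + q) * (1 - x) * F (q + 2)
    = (a-q-1)*(b-q-1) * F q + q*(a+b-3-2*q) * F (q+1) + q*(1+q) * F (q+2)
      - x * (q*(c-q-1) * F (q+1) + q*(1+q) * F (q+2))"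
    by algebra
  ultimately show ?thesis
    unfolding F_def by simp
qed

lemma hyp3F2_denominator_contiguous:
  fixes a b c q x :: complex
  assumes a2: "a - 2 \<notin> \<int>\<^sub>\<le>\<^sub>0" and a1: "a - 1 \<notin> \<int>\<^sub>\<le>\<^sub>0" and a0: "a \<notin> \<int>\<^sub>\<le>\<^sub>0"
    and b: "b \<notin> \<int>\<^sub>\<le>\<^sub>0" and x: "norm x < 1"
  shows "(a - 2) * (a - 1) * (1 - x) * hyp3F2 1 c q (a - 2) b x
           + (a - 1) * ((2 * a - c - q - 3) * x - a + b + 1) * hyp3F2 1 c q (a - 1) b x
           - (a - q - 1) * (a - c - 1) * x * hyp3F2 1 c q a b x
         = (a - 1) * (b - 1)"
proof -
  define A where "A d n = hyp3F2_coeff c q d b n * x ^ n" for d n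
  define F where "F d = hyp3F2 1 c q d b x" for d
  have sums: "A d sums F d" if "d \<notin> \<int>\<^sub>\<le>\<^sub>0" for d
    unfolding A_def F_def hyp3F2_one_eq_suminf using summable_hyp3F2_coeff_power[OF that b x]
    by (rule summable_sums)
  have "(\<lambda>n. (a-2)*(a-1) * A (a-2) n + (a-1)*(b-a+1) * A (a-1) n)
          sums ((a-2)*(a-1) * F (a-2) + (a-1)*(b-a+1) * F (a-1))"
    by (intro sums_add sums_mult sums a2 a1)
  moreover have "(\<lambda>n. (a-2)*(a-1) * A (a-2) n - (a-1)*(2*a-c-q-3) * A (a-1) n + (a-q-1)*(a-c-1) * A a n)
          sums ((a-2)*(a-1) * F (a-2) - (a-1)*(2*a-c-q-3) * F (a-1) + (a-q-1)*(a-c-1) * F a)"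
    by (intro sums_add sums_diff sums_mult sums a2 a1 a0)
  moreover have "(a-2)*(a-1) * A (a-2) (Suc n) + (a-1)*(b-a+1) * A (a-1) (Suc n)
      = x * ((a-2)*(a-1) * A (a-2) n - (a-1)*(2*a-c-q-3) * A (a-1) n + (a-q-1)*(a-c-1) * A a n)" for n
    using arg_cong[where f="\<lambda>t. t * x ^ Suc n",
                   OF hyp3F2_coeff_denominator_recurrence[OF a2 a1 a0 b, where c=c and q=q and n=n]]
    unfolding A_def by (simp add: algebra_simps)
  moreover have "(a-2)*(a-1) * A (a-2) 0 + (a-1)*(b-a+1) * A (a-1) 0 = (a-1)*(b-1)"
    by (simp add: A_def algebra_simps)
  ultimately have "(a-2)*(a-1) * F (a-2) + (a-1)*(b-a+1) * F (a-1)
      = (a-1)*(b-1) + x * ((a-2)*(a-1) * F (a-2) - (a-1)*(2*a-c-q-3) * F (a-1) + (a-q-1)*(a-c-1) * F a)"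
    by (rule sums_shift_eq)
  moreover have "(a - 2) * (a - 1) * (1 - x) * F (a - 2) + (a - 1) * ((2 * a - c - q - 3) * x - a + b + 1) * F (a - 1)
      - (a - q - 1) * (a - c - 1) * x * F a
    = (a-2)*(a-1) * F (a-2) + (a-1)*(b-a+1) * F (a-1)
      - x * ((a-2)*(a-1) * F (a-2) - (a-1)*(2*a-c-q-3) * F (a-1) + (a-q-1)*(a-c-1) * F a)"
    by algebra
  ultimately show ?thesis
    unfolding F_def by simp
qed

lemma hyp3F2_numerator_contiguous_at_1:
  fixes a b c q :: complex
  assumes a: "a \<notin> \<int>\<^sub>\<le>\<^sub>0" and b: "b \<notin> \<int>\<^sub>\<le>\<^sub>0" and conv: "Re (a + b) > Re (c + q + 2)"
  shows "(a - q - 1) * (b - q - 1) * hyp3F2 1 c q a b 1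
           + q * (a + b - c - 2 - q) * hyp3F2 1 c (q + 1) a b 1
         = (a - 1) * (b - 1)"
proof -
  define A where "A p = hyp3F2_coeff c p a b" for p
  define F where "F p = hyp3F2 1 c p a b 1" for p
  have sums: "A p sums F p" if "Re (c + p - a - b) < -1" for p
    unfolding A_def F_def hyp3F2_one_eq_suminf using summable_hyp3F2_coeff[OF a b that]
    by (simp add: summable_sums)
  have "(\<lambda>n. (a-q-1)*(b-q-1) * A q n + q*(a+b-3-2*q) * A (q+1) n)
          sums ((a-q-1)*(b-q-1) * F q + q*(a+b-3-2*q) * F (q+1))"
    using conv by (intro sums_add sums_mult sums) auto
  moreover have "(\<lambda>n. q*(c-q-1) * A (q+1) n) sums (q*(c-q-1) * F (q+1))"
    using conv by (intro sums_mult sums) auto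
  moreover have "(\<lambda>n. q*(1+q) * A (q+2) n) \<longlonglongrightarrow> 0"
    unfolding A_def using conv by (intro tendsto_mult_right_zero hyp3F2_coeff_tendsto_zero[OF a b]) auto
  moreover have "(a-q-1)*(b-q-1) * A q (Suc n) + q*(a+b-3-2*q) * A (q+1) (Suc n) + q*(1+q) * A (q+2) (Suc n)
      = q*(c-q-1) * A (q+1) n + q*(1+q) * A (q+2) n" for n
    unfolding A_def by (rule hyp3F2_coeff_numerator_recurrence[OF a b])
  moreover have "(a-q-1)*(b-q-1) * A q 0 + q*(a+b-3-2*q) * A (q+1) 0 + q*(1+q) * A (q+2) 0 = (a-1)*(b-1)"
    by (simp add: A_def algebra_simps)
  ultimately have "(a-q-1)*(b-q-1) * F q + q*(a+b-3-2*q) * F (q+1) = (a-1)*(b-1) + q*(c-q-1) * F (q+1)"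
    by (rule sums_telescoping_eq)
  then show ?thesis
    unfolding F_def by algebra
qed

lemma hyp3F2_denominator_contiguous_at_1:
  fixes a b c q :: complex
  assumes a2: "a - 2 \<notin> \<int>\<^sub>\<le>\<^sub>0" and a1: "a - 1 \<notin> \<int>\<^sub>\<le>\<^sub>0" and a0: "a \<notin> \<int>\<^sub>\<le>\<^sub>0"
    and b: "b \<notin> \<int>\<^sub>\<le>\<^sub>0" and conv: "Re (a + b) > Re (c + q + 2)"
  shows "(a - 1) * (a + b - c - q - 2) * hyp3F2 1 c q (a - 1) b 1
           - (a - q - 1) * (a - c - 1) * hyp3F2 1 c q a b 1
         = (a - 1) * (b - 1)"
proof -
  define A where "A d = hyp3F2_coeff c q d b" for d
  define F where "F d = hyp3F2 1 c q d b 1" for d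
  have sums: "A d sums F d" if "d \<notin> \<int>\<^sub>\<le>\<^sub>0" "Re (c + q - d - b) < -1" for d
    unfolding A_def F_def hyp3F2_one_eq_suminf using summable_hyp3F2_coeff[OF that(1) b that(2)]
    by (simp add: summable_sums)
  have "(\<lambda>n. (a-1)*(b-a+1) * A (a-1) n) sums ((a-1)*(b-a+1) * F (a-1))"
    using conv by (intro sums_mult sums a1) auto
  moreover have "(\<lambda>n. (a-q-1)*(a-c-1) * A a n - (a-1)*(2*a-c-q-3) * A (a-1) n)
          sums ((a-q-1)*(a-c-1) * F a - (a-1)*(2*a-c-q-3) * F (a-1))"
    using conv by (intro sums_diff sums_mult sums a1 a0) auto
  moreover have "(\<lambda>n. (a-2)*(a-1) * A (a-2) n) \<longlonglongrightarrow> 0"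
    unfolding A_def using conv by (intro tendsto_mult_right_zero hyp3F2_coeff_tendsto_zero[OF a2 b]) auto
  moreover have "(a-1)*(b-a+1) * A (a-1) (Suc n) + (a-2)*(a-1) * A (a-2) (Suc n)
      = ((a-q-1)*(a-c-1) * A a n - (a-1)*(2*a-c-q-3) * A (a-1) n) + (a-2)*(a-1) * A (a-2) n" for n
    using hyp3F2_coeff_denominator_recurrence[OF a2 a1 a0 b, where c=c and q=q and n=n]
    unfolding A_def by (simp add: algebra_simps)
  moreover have "(a-1)*(b-a+1) * A (a-1) 0 + (a-2)*(a-1) * A (a-2) 0 = (a-1)*(b-1)"
    by (simp add: A_def algebra_simps)
  ultimately have "(a-1)*(b-a+1) * F (a-1)
      = (a-1)*(b-1) + ((a-q-1)*(a-c-1) * F a - (a-1)*(2*a-c-q-3) * F (a-1))"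
    by (rule sums_telescoping_eq)
  then show ?thesis
    unfolding F_def by algebra
qed

theorem lemma7p2:
  fixes a b c q x :: complex
  assumes a2: "a - 2 \<notin> \<int>\<^sub>\<le>\<^sub>0" and a1: "a - 1 \<notin> \<int>\<^sub>\<le>\<^sub>0" and a0: "a \<notin> \<int>\<^sub>\<le>\<^sub>0"
      and b0: "b \<notin> \<int>\<^sub>\<le>\<^sub>0"
  shows "(norm x < 1 \<longrightarrow>
           (a - q - 1) * (b - q - 1) * hyp3F2 1 c q a b x
           + q * (a + b - 3 - 2 * q - (c - q - 1) * x) * hyp3F2 1 c (q + 1) a b x
           + q * (1 + q) * (1 - x) * hyp3F2 1 c (q + 2) a b x
           = (a - 1) * (b - 1)) \<and>
        (norm x < 1 \<longrightarrow>
           (a - 2) * (a - 1) * (1 - x) * hyp3F2 1 c q (a - 2) b x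
           + (a - 1) * ((2 * a - c - q - 3) * x - a + b + 1) * hyp3F2 1 c q (a - 1) b x
           - (a - q - 1) * (a - c - 1) * x * hyp3F2 1 c q a b x
           = (a - 1) * (b - 1)) \<and>
        (a \<in> \<real> \<and> b \<in> \<real> \<and> c \<in> \<real> \<and> q \<in> \<real> \<and> Re (a + b) > Re (c + q + 2) \<longrightarrow>
           (a - q - 1) * (b - q - 1) * hyp3F2 1 c q a b 1
           + q * (a + b - c - 2 - q) * hyp3F2 1 c (q + 1) a b 1
           = (a - 1) * (b - 1)) \<and>
        (a \<in> \<real> \<and> b \<in> \<real> \<and> c \<in> \<real> \<and> q \<in> \<real> \<and> Re (a + b) > Re (c + q + 2) \<longrightarrow>
           (a - 1) * (a + b - c - q - 2) * hyp3F2 1 c q (a - 1) b 1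
           - (a - q - 1) * (a - c - 1) * hyp3F2 1 c q a b 1
           = (a - 1) * (b - 1))"
  using hyp3F2_numerator_contiguous[OF a0 b0] hyp3F2_denominator_contiguous[OF a2 a1 a0 b0]
    hyp3F2_numerator_contiguous_at_1[OF a0 b0] hyp3F2_denominator_contiguous_at_1[OF a2 a1 a0 b0]
  by blast

end
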